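(* Let $\mathbb{R}^n$ and $\mathbb{R}^m$ be endowed with arbitrary norms (both denoted $\|\cdot\|$) and let $A\in\mathbb{R}^{m\times n}$ have at least two different columns. Then \[ \max_{w\in\mathbb{R}^n\setminus\{0\},\ \langle\mathbf{1},w\rangle=0}\frac{\|Aw\|}{\|w\|}=\max_{u\in\mathrm{conv}(A),\ x\in\Delta_{n-1}\setminus Z(u)}\frac{\|Ax-u\|}{\mathrm{dist}(x,Z(u))}, \] and \[ \frac{\Phi(A)}{\max_{i=1,\dots,n}\|e_i\|}\le\min_{u\in\mathrm{conv}(A),\ x\in\Delta_{n-1}\setminus Z(u)}\frac{2\|Ax-u\|}{\mathrm{dist}(x,Z(u))}. \]
   Context: $\mathbf{1}$ is the all-ones vector and $e_i$ the standard basis vectors of $\mathbb{R}^n$. $\Delta_{n-1}=\{x\in\mathbb{R}^n_+:\sum_ix_i=1\}$; $A$ is identified with the set of its columns; $\mathrm{conv}(A)=\{Ax:x\in\Delta_{n-1}\}$; for $u\in\mathrm{conv}(A)$, $Z(u)=\{z\in\Delta_{n-1}:Az=u\}$ and $\mathrm{dist}(x,Z(u))=\min_{z\in Z(u)}\|x-z\|$ (norm of $\mathbb{R}^n$). The facial distance is $\Phi(A)=\min\{\mathrm{dist}(F,\mathrm{conv}(A\setminus F)):F\text{ a face of }\mathrm{conv}(A),\ \emptyset\ne F\ne\mathrm{conv}(A)\}$, with $A\setminus F$ the columns of $A$ not in $F$ and $\mathrm{dist}(F,G)=\inf_{u\in F,w\in G}\|u-w\|$ (norm of $\mathbb{R}^m$).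 *)

theory Defs
  imports "HOL-Analysis.Analysis"
begin

definition is_norm :: "('a::real_vector \<Rightarrow> real) \<Rightarrow> bool" where
  "is_norm N \<longleftrightarrow> (\<forall>x. N x \<ge> 0) \<and> (\<forall>x. N x = 0 \<longleftrightarrow> x = 0)
     \<and> (\<forall>c x. N (c *\<^sub>R x) = \<bar>c\<bar> * N x) \<and> (\<forall>x y. N (x + y) \<le> N x + N y)"

definition std_simplex :: "(real^'n) set" where
  "std_simplex = {x. (\<forall>i. x $ i \<ge> 0) \<and> (\<Sum>i\<in>UNIV. x $ i) = 1}"

definition convA :: "real^'n^'m \<Rightarrow> (real^'m) set" where
  "convA A = (\<lambda>x. A *v x) ` std_simplex"

definition Zset :: "real^'n^'m \<Rightarrow> real^'m \<Rightarrow> (real^'n) set" where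
  "Zset A u = {z \<in> std_simplex. A *v z = u}"

definition distN :: "('a::real_vector \<Rightarrow> real) \<Rightarrow> 'a \<Rightarrow> 'a set \<Rightarrow> real" where
  "distN N x S = Inf {N (x - z) | z. z \<in> S}"

definition setdistN :: "('a::real_vector \<Rightarrow> real) \<Rightarrow> 'a set \<Rightarrow> 'a set \<Rightarrow> real" where
  "setdistN N F G = Inf {N (u - w) | u w. u \<in> F \<and> w \<in> G}"

text \<open>Facial distance Phi(A); A minus F is the set of columns of A not lying in F.\<close>
definition facial_distance :: "(real^'m \<Rightarrow> real) \<Rightarrow> real^'n^'m \<Rightarrow> real" where
  "facial_distance N A = Inf {setdistN N F (convex hull {column i A | i. column i A \<notin> F}) | F.
      F face_of convA A \<and> F \<noteq> {} \<and> F \<noteq> convA A}"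

definition is_max :: "real set \<Rightarrow> real \<Rightarrow> bool" where
  "is_max S v \<longleftrightarrow> v \<in> S \<and> (\<forall>y\<in>S. y \<le> v)"

definition is_min :: "real set \<Rightarrow> real \<Rightarrow> bool" where
  "is_min S v \<longleftrightarrow> v \<in> S \<and> (\<forall>y\<in>S. v \<le> y)"

end

theory Submission
  imports Defs
begin

(* Every vector w with coordinate sum 0 is a positive multiple of p - q for a pair (q, p) of
   points of the simplex with disjoint supports, and so is x - z for a nearest point z of Z(u)
   to x. Hence both suprema in the first claim equal the maximum of ||A(p - q)|| / ||p - q||
   over the compact set of such pairs: at a maximiser, x = p and u = Aq give at least this
   value because dist(p, Z(Aq)) <= ||p - q||. The pairs coming from nearest points are those
   in which q is nearest to p within Z(Aq); they form a closed set, so the minimum is attained.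
   For the facial bound choose the nearest point z of maximal overlap with x: then no column in
   the support of p lies in the smallest face of conv(A) containing Aq, whence
   Phi(A) <= ||Aq - Ap||, while dist(x, Z(u)) <= l ||p - q|| <= 2 l max_i ||e_i||. *)

lemma is_norm_nonneg: "is_norm N \<Longrightarrow> 0 \<le> N x"
  by (simp add: is_norm_def)

lemma is_norm_zero: "is_norm N \<Longrightarrow> N 0 = 0"
  by (simp add: is_norm_def)

lemma is_norm_pos: "is_norm N \<Longrightarrow> x \<noteq> 0 \<Longrightarrow> 0 < N x"
  unfolding is_norm_def by (metis less_eq_real_def)

lemma is_norm_scaleR: "is_norm N \<Longrightarrow> N (c *\<^sub>R x) = \<bar>c\<bar> * N x"
  by (simp add: is_norm_def)

lemma is_norm_triangle: "is_norm N \<Longrightarrow> N (x + y) \<le> N x + N y"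
  by (simp add: is_norm_def)

lemma is_norm_minus: "is_norm N \<Longrightarrow> N (- x) = N x"
  using is_norm_scaleR[of N "-1" x] by simp

lemma is_norm_minus_commute: "is_norm N \<Longrightarrow> N (x - y) = N (y - x)"
  using is_norm_minus[of N "x - y"] by simp

lemma is_norm_sum_le:
  assumes N: "is_norm N" and "finite S"
  shows "N (sum f S) \<le> (\<Sum>i\<in>S. N (f i))"
  using assms(2)
proof (induction S rule: finite_induct)
  case empty
  then show ?case by (simp add: is_norm_zero[OF N])
next
  case (insert x F)
  then show ?case using is_norm_triangle[OF N, of "f x" "sum f F"] by simp
qed

lemma is_norm_le_sum_axis:
  fixes v :: "real^'n"
  assumes N: "is_norm N"
  shows "N v \<le> (\<Sum>i\<in>UNIV. \<bar>v$i\<bar> * N (axis i 1))"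
proof -
  have "N v = N (\<Sum>i\<in>UNIV. (v$i) *\<^sub>R axis i 1)"
    using basis_expansion[of v] by (simp add: scalar_mult_eq_scaleR)
  also have "\<dots> \<le> (\<Sum>i\<in>UNIV. N ((v$i) *\<^sub>R axis i 1))"
    by (rule is_norm_sum_le[OF N]) simp
  finally show ?thesis by (simp add: is_norm_scaleR[OF N])
qed

lemma is_norm_lipschitz:
  fixes N :: "real^'n \<Rightarrow> real"
  assumes N: "is_norm N"
  shows "(\<Sum>i\<in>UNIV. N (axis i 1))-lipschitz_on S N"
proof (rule lipschitz_onI)
  let ?C = "\<Sum>i\<in>UNIV. N (axis i 1)"
  have bound: "N v \<le> ?C * norm v" for v :: "real^'n"
  proof -
    have "N v \<le> (\<Sum>i\<in>UNIV. \<bar>v$i\<bar> * N (axis i 1))" by (rule is_norm_le_sum_axis[OF N])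
    also have "\<dots> \<le> (\<Sum>i\<in>UNIV. norm v * N (axis i 1))"
      by (intro sum_mono mult_right_mono) (auto simp: component_le_norm_cart is_norm_nonneg[OF N])
    finally show ?thesis by (simp add: sum_distrib_left mult.commute)
  qed
  fix x y :: "real^'n"
  have "N x \<le> N (x - y) + N y" "N y \<le> N (y - x) + N x"
    using is_norm_triangle[OF N, of "x - y" y] is_norm_triangle[OF N, of "y - x" x] by simp_all
  then show "dist (N x) (N y) \<le> ?C * dist x y"
    using bound[of "x - y"] bound[of "y - x"]
    by (simp add: dist_real_def dist_norm norm_minus_commute abs_le_iff)
qed (simp add: sum_nonneg is_norm_nonneg[OF N])

lemma continuous_on_is_norm:
  fixes N :: "real^'n \<Rightarrow> real"
  assumes "is_norm N" and "continuous_on S f"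
  shows "continuous_on S (\<lambda>x. N (f x))"
  using continuous_on_compose2[OF lipschitz_on_continuous_on[OF is_norm_lipschitz[OF assms(1)]]
      assms(2) subset_UNIV] .

lemma tendsto_is_norm:
  fixes N :: "real^'n \<Rightarrow> real"
  assumes "is_norm N" and "f \<longlonglongrightarrow> a"
  shows "(\<lambda>k. N (f k)) \<longlonglongrightarrow> N a"
  using lipschitz_on_continuous_on[OF is_norm_lipschitz[OF assms(1)], of UNIV] assms(2)
  by (simp add: continuous_on_tendsto_compose)

lemma std_simplex_nonneg: "x \<in> std_simplex \<Longrightarrow> 0 \<le> x$i"
  by (simp add: std_simplex_def)

lemma std_simplex_sum: "x \<in> std_simplex \<Longrightarrow> (\<Sum>i\<in>UNIV. x$i) = 1"
  by (simp add: std_simplex_def)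

lemma std_simplex_le_1:
  assumes "x \<in> std_simplex"
  shows "x$i \<le> 1"
proof -
  have "x$i \<le> (\<Sum>j\<in>UNIV. x$j)"
    using assms by (intro member_le_sum) (auto simp: std_simplex_def)
  then show ?thesis using std_simplex_sum[OF assms] by simp
qed

lemma std_simplex_diff_sum:
  "x \<in> std_simplex \<Longrightarrow> z \<in> std_simplex \<Longrightarrow> (\<Sum>i\<in>UNIV. (x - z)$i) = 0"
  by (simp add: std_simplex_def sum_subtractf)

lemma axis_in_std_simplex: "axis i (1::real) \<in> std_simplex"
  by (simp add: std_simplex_def axis_def sum.delta)

lemma convex_std_simplex: "convex (std_simplex :: (real^'n) set)"
  unfolding convex_def std_simplex_def
  by (simp add: sum.distrib flip: sum_distrib_left)

lemma compact_std_simplex: "compact (std_simplex :: (real^'n) set)"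
proof -
  have "std_simplex = (\<Inter>i. {x::real^'n. 0 \<le> x$i}) \<inter> {x. (\<Sum>i\<in>UNIV. x$i) = 1}"
    by (auto simp: std_simplex_def)
  moreover have "closed (\<Inter>i. {x::real^'n. 0 \<le> x$i})"
    by (intro closed_INT ballI closed_Collect_le continuous_intros)
  moreover have "closed {x::real^'n. (\<Sum>i\<in>UNIV. x$i) = 1}"
    by (intro closed_Collect_eq continuous_intros)
  ultimately have "closed (std_simplex :: (real^'n) set)"
    by (metis closed_Int)
  moreover have "std_simplex \<subseteq> cball (0::real^'n) 1"
  proof
    fix x :: "real^'n"
    assume "x \<in> std_simplex"
    then have "norm x \<le> 1" using norm_le_l1_cart[of x] by (simp add: std_simplex_def)
    then show "x \<in> cball 0 1" by simp
  qed
  ultimately show ?thesis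
    by (metis bounded_cball bounded_subset compact_eq_bounded_closed)
qed

lemma std_simplex_norm_le:
  assumes N: "is_norm (N :: real^'n \<Rightarrow> real)" and p: "p \<in> std_simplex"
  shows "N p \<le> Max (range (\<lambda>i. N (axis i 1)))"
proof -
  let ?M = "Max (range (\<lambda>i. N (axis i 1)))"
  have "N p \<le> (\<Sum>i\<in>UNIV. \<bar>p$i\<bar> * N (axis i 1))" by (rule is_norm_le_sum_axis[OF N])
  also have "\<dots> \<le> (\<Sum>i\<in>UNIV. p$i * ?M)"
    using std_simplex_nonneg[OF p] by (intro sum_mono) (simp add: mult_left_mono)
  also have "\<dots> = ?M" using std_simplex_sum[OF p] by (simp flip: sum_distrib_right)
  finally show ?thesis .
qed

lemma std_simplex_diff_norm_le:
  assumes N: "is_norm (N :: real^'n \<Rightarrow> real)" and "p \<in> std_simplex" "q \<in> std_simplex"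
  shows "N (p - q) \<le> 2 * Max (range (\<lambda>i. N (axis i 1)))"
  using is_norm_triangle[OF N, of p "- q"] is_norm_minus[OF N, of q]
    std_simplex_norm_le[OF N assms(2)] std_simplex_norm_le[OF N assms(3)]
  by simp

lemma Max_norm_axis_pos:
  assumes N: "is_norm (N :: real^'n \<Rightarrow> real)"
  shows "0 < Max (range (\<lambda>i. N (axis i 1)))"
proof -
  have "0 < N (axis i 1)" for i using is_norm_pos[OF N] by simp
  then show ?thesis by (simp add: Max_gr_iff)
qed

lemma convex_Zset: "convex (Zset A u)"
proof -
  have "Zset A u = std_simplex \<inter> {z. A *v z = u}" by (auto simp: Zset_def)
  moreover have "convex {z. A *v z = u}"
    unfolding convex_def
    by (auto simp: matrix_vector_right_distrib matrix_vector_mult_scaleR simp flip: scaleR_add_left)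
  ultimately show ?thesis using convex_std_simplex convex_Int by metis
qed

lemma compact_Zset: "compact (Zset A u)"
proof -
  have "Zset A u = std_simplex \<inter> {z. A *v z = u}" by (auto simp: Zset_def)
  moreover have "closed {z. A *v z = u}" by (intro closed_Collect_eq continuous_intros)
  ultimately show ?thesis using compact_std_simplex by auto
qed

lemma Zset_nonempty: "u \<in> convA A \<Longrightarrow> Zset A u \<noteq> {}"
  by (auto simp: convA_def Zset_def)

lemma distN_Zset_attained:
  assumes N: "is_norm N" and u: "u \<in> convA A"
  obtains z where "z \<in> Zset A u" "distN N x (Zset A u) = N (x - z)"
    "\<And>z'. z' \<in> Zset A u \<Longrightarrow> N (x - z) \<le> N (x - z')"
proof -
  have "continuous_on (Zset A u) (\<lambda>z. N (x - z))"
    by (intro continuous_on_is_norm[OF N] continuous_intros)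
  then obtain z where z: "z \<in> Zset A u" "\<And>z'. z' \<in> Zset A u \<Longrightarrow> N (x - z) \<le> N (x - z')"
    using continuous_attains_inf[OF compact_Zset Zset_nonempty[OF u]] by blast
  moreover have "distN N x (Zset A u) = N (x - z)"
    unfolding distN_def by (rule cInf_eq_minimum) (use z in auto)
  ultimately show ?thesis using that by blast
qed

lemma distN_Zset_pos:
  assumes N: "is_norm N" and "u \<in> convA A" and "x \<notin> Zset A u"
  shows "0 < distN N x (Zset A u)"
proof -
  obtain z where "z \<in> Zset A u" "distN N x (Zset A u) = N (x - z)"
    using distN_Zset_attained[OF assms(1,2)] by blast
  then show ?thesis using assms(3) is_norm_pos[OF N, of "x - z"] by auto
qed

lemma distN_le:
  assumes "is_norm N" and "z \<in> S"
  shows "distN N x S \<le> N (x - z)"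
  unfolding distN_def
  using assms by (intro cInf_lower bdd_belowI[of _ 0]) (auto simp: is_norm_nonneg)

text \<open>For points of the simplex, an \<open>\<ell>\<^sub>1\<close>-distance of \<open>2\<close> means disjoint supports.\<close>

definition disjoint_pairs :: "((real^'n) \<times> (real^'n)) set" where
  "disjoint_pairs = {(q, p). q \<in> std_simplex \<and> p \<in> std_simplex \<and> (\<Sum>i\<in>UNIV. \<bar>p$i - q$i\<bar>) = 2}"

lemma disjoint_pairs_neq: "(q, p) \<in> disjoint_pairs \<Longrightarrow> p \<noteq> q"
  by (auto simp: disjoint_pairs_def)

lemma compact_disjoint_pairs: "compact (disjoint_pairs :: ((real^'n) \<times> (real^'n)) set)"
proof -
  have "closed {y :: (real^'n) \<times> (real^'n). (\<Sum>i\<in>UNIV. \<bar>snd y $ i - fst y $ i\<bar>) = 2}"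
    by (intro closed_Collect_eq continuous_intros)
  then have "compact ((std_simplex \<times> std_simplex) \<inter>
      {y :: (real^'n) \<times> (real^'n). (\<Sum>i\<in>UNIV. \<bar>snd y $ i - fst y $ i\<bar>) = 2})"
    by (intro compact_Int_closed compact_Times compact_std_simplex)
  also have "\<dots> = disjoint_pairs"
    by (auto simp: disjoint_pairs_def)
  finally show ?thesis .
qed

lemma sum_zero_vector_split:
  fixes w :: "real^'n"
  assumes w0: "w \<noteq> 0" and sum0: "(\<Sum>i\<in>UNIV. w$i) = 0"
  obtains l q p where "0 < l" "(q, p) \<in> disjoint_pairs" "w = l *\<^sub>R (p - q)"
    "\<And>i. l * p$i = max (w$i) 0" "\<And>i. l * q$i = max (- w$i) 0"
proof -
  define l where "l = (\<Sum>i\<in>UNIV. max (w$i) 0)"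
  have sum_neg: "(\<Sum>i\<in>UNIV. max (- w$i) 0) = l"
  proof -
    have "(\<Sum>i\<in>UNIV. max (w$i) 0) - (\<Sum>i\<in>UNIV. max (- w$i) 0) = (\<Sum>i\<in>UNIV. w$i)"
      unfolding sum_subtractf[symmetric] by (rule sum.cong) (auto simp: max_def)
    then show ?thesis using sum0 by (simp add: l_def)
  qed
  have "l \<noteq> 0"
  proof
    assume "l = 0"
    then have "max (w$i) 0 = 0 \<and> max (- w$i) 0 = 0" for i
      using sum_neg by (simp add: l_def sum_nonneg_eq_0_iff)
    moreover have "w$i \<le> max (w$i) 0" "- w$i \<le> max (- w$i) 0" for i
      by simp_all
    ultimately have "w$i = 0" for i
      by (smt (verit))
    then show False using w0 by (simp add: vec_eq_iff)
  qed
  then have l: "0 < l" unfolding l_def by (simp add: less_le sum_nonneg)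
  define p where "p = (\<chi> i. max (w$i) 0 / l)"
  define q where "q = (\<chi> i. max (- w$i) 0 / l)"
  have lp: "l * p$i = max (w$i) 0" and lq: "l * q$i = max (- w$i) 0" for i
    using l by (simp_all add: p_def q_def)
  have "p \<in> std_simplex"
    using l by (simp add: std_simplex_def p_def flip: sum_divide_distrib l_def)
  moreover have "q \<in> std_simplex"
    using l by (simp add: std_simplex_def q_def sum_neg flip: sum_divide_distrib)
  moreover have "l * \<bar>p$i - q$i\<bar> = l * p$i + l * q$i" for i
  proof -
    have "l * \<bar>p$i - q$i\<bar> = \<bar>l * p$i - l * q$i\<bar>"
      using l by (simp add: abs_mult flip: right_diff_distrib)
    then show ?thesis unfolding lp lq by (simp add: max_def)
  qed
  then have "l * (\<Sum>i\<in>UNIV. \<bar>p$i - q$i\<bar>) = l * 2"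
    by (simp add: sum_distrib_left sum.distrib lp lq sum_neg flip: l_def)
  moreover have "w = l *\<^sub>R (p - q)"
    by (simp add: vec_eq_iff right_diff_distrib lp lq max_def)
  ultimately show ?thesis
    using that[OF l _ _ lp lq] l by (simp add: disjoint_pairs_def)
qed

definition nearest_pairs :: "real^'n^'m \<Rightarrow> (real^'n \<Rightarrow> real) \<Rightarrow> ((real^'n) \<times> (real^'n)) set" where
  "nearest_pairs A N =
     {(q, p) \<in> disjoint_pairs. \<forall>\<zeta>\<in>Zset A (A *v q). N (p - q) \<le> N (p - \<zeta>)}"

lemma Zset_exchange:
  assumes z: "z \<in> Zset A u" and l: "0 \<le> l" and lq: "\<And>i. l * q$i \<le> z$i"
    and q: "q \<in> std_simplex" and \<zeta>: "\<zeta> \<in> Zset A (A *v q)"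
  shows "z - l *\<^sub>R q + l *\<^sub>R \<zeta> \<in> Zset A u"
proof -
  have "z \<in> std_simplex" "A *v z = u" "\<zeta> \<in> std_simplex" "A *v \<zeta> = A *v q"
    using z \<zeta> by (auto simp: Zset_def)
  moreover have "0 \<le> (z - l *\<^sub>R q + l *\<^sub>R \<zeta>) $ i" for i
    using lq[of i] l std_simplex_nonneg[OF \<open>\<zeta> \<in> std_simplex\<close>, of i] by simp
  moreover have "(\<Sum>i\<in>UNIV. (z - l *\<^sub>R q + l *\<^sub>R \<zeta>) $ i) = 1"
    using std_simplex_sum[OF q] std_simplex_sum[OF \<open>z \<in> std_simplex\<close>]
      std_simplex_sum[OF \<open>\<zeta> \<in> std_simplex\<close>]
    by (simp add: sum.distrib sum_subtractf flip: sum_distrib_left)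
  ultimately show ?thesis
    by (simp add: Zset_def std_simplex_def algebra_simps)
qed

lemma nearest_pairs_subset: "nearest_pairs A N \<subseteq> disjoint_pairs"
  by (auto simp: nearest_pairs_def)

lemma nearest_pair_of_nearest_point:
  assumes N: "is_norm N" and x: "x \<in> std_simplex" and z: "z \<in> Zset A u" and xz: "x \<noteq> z"
    and nearest: "\<And>z'. z' \<in> Zset A u \<Longrightarrow> N (x - z) \<le> N (x - z')"
  obtains l q p where "0 < l" "(q, p) \<in> nearest_pairs A N" "x - z = l *\<^sub>R (p - q)"
proof -
  have zS: "z \<in> std_simplex" using z by (simp add: Zset_def)
  obtain l q p where l: "0 < l" and qp: "(q, p) \<in> disjoint_pairs" and xzl: "x - z = l *\<^sub>R (p - q)"
    and lq: "\<And>i. l * q$i = max (- (x - z)$i) 0"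
    using sum_zero_vector_split[OF _ std_simplex_diff_sum[OF x zS]] xz by (metis right_minus_eq)
  have q: "q \<in> std_simplex" using qp by (simp add: disjoint_pairs_def)
  have "N (p - q) \<le> N (p - \<zeta>)" if \<zeta>: "\<zeta> \<in> Zset A (A *v q)" for \<zeta>
  proof -
    have "l * q$i \<le> z$i" for i
      unfolding lq using std_simplex_nonneg[OF x, of i] std_simplex_nonneg[OF zS, of i] by simp
    then have "z - l *\<^sub>R q + l *\<^sub>R \<zeta> \<in> Zset A u"
      using Zset_exchange[OF z less_imp_le[OF l] _ q \<zeta>] by blast
    then have "N (x - z) \<le> N (x - (z - l *\<^sub>R q + l *\<^sub>R \<zeta>))" by (rule nearest)
    also have "x - (z - l *\<^sub>R q + l *\<^sub>R \<zeta>) = l *\<^sub>R (p - \<zeta>)"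
      using xzl by (simp add: algebra_simps)
    finally show ?thesis using l xzl by (simp add: is_norm_scaleR[OF N])
  qed
  then have "(q, p) \<in> nearest_pairs A N" using qp by (simp add: nearest_pairs_def)
  with l xzl show ?thesis using that by blast
qed

text \<open>Perturbing \<open>Q k\<close> by half of \<open>\<zeta> - q\<close> keeps it in the simplex for large \<open>k\<close>,
  and convexity of \<open>N\<close> turns the limiting inequality into \<open>N (p - q) \<le> N (p - \<zeta>)\<close>.\<close>

lemma nearest_pair_limit:
  assumes N: "is_norm N" and Q: "Q \<longlonglongrightarrow> q" and P: "P \<longlonglongrightarrow> p"
    and QS: "\<And>k. Q k \<in> std_simplex" and q: "q \<in> std_simplex" and \<zeta>: "\<zeta> \<in> Zset A (A *v q)"
    and nearest: "\<And>k \<zeta>'. \<zeta>' \<in> Zset A (A *v Q k) \<Longrightarrow> N (P k - Q k) \<le> N (P k - \<zeta>')"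
  shows "N (p - q) \<le> N (p - \<zeta>)"
proof -
  have \<zeta>S: "\<zeta> \<in> std_simplex" and A\<zeta>: "A *v \<zeta> = A *v q" using \<zeta> by (auto simp: Zset_def)
  define Z where "Z k = Q k + (1/2) *\<^sub>R (\<zeta> - q)" for k
  have "\<forall>\<^sub>F k in sequentially. q$i / 2 \<le> Q k $ i" for i
  proof (cases "0 < q$i")
    case True
    then show ?thesis
      using order_tendstoD(1)[OF tendsto_vec_nth[OF Q], of "q$i / 2" i]
      by (auto elim: eventually_mono)
  next
    case False
    then show ?thesis using std_simplex_nonneg[OF q, of i] std_simplex_nonneg[OF QS] by simp
  qed
  then have "\<forall>\<^sub>F k in sequentially. \<forall>i. q$i / 2 \<le> Q k $ i"
    by (rule eventually_all_finite)
  then have "\<forall>\<^sub>F k in sequentially. Z k \<in> Zset A (A *v Q k)"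
  proof (rule eventually_mono)
    fix k
    assume half: "\<forall>i. q$i / 2 \<le> Q k $ i"
    have "0 \<le> Z k $ i" for i
      using half[rule_format, of i] std_simplex_nonneg[OF \<zeta>S, of i] by (simp add: Z_def field_simps)
    moreover have "(\<Sum>i\<in>UNIV. Z k $ i) = 1"
      using std_simplex_sum[OF QS[of k]] std_simplex_sum[OF \<zeta>S] std_simplex_sum[OF q]
      by (simp add: Z_def sum.distrib sum_subtractf flip: sum_divide_distrib)
    moreover have "A *v Z k = A *v Q k" using A\<zeta> by (simp add: Z_def algebra_simps)
    ultimately show "Z k \<in> Zset A (A *v Q k)" by (simp add: Zset_def std_simplex_def)
  qed
  then have "\<forall>\<^sub>F k in sequentially. N (P k - Q k) \<le> N (P k - Z k)"
    by (auto elim: eventually_mono intro: nearest)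
  moreover have "(\<lambda>k. N (P k - Q k)) \<longlonglongrightarrow> N (p - q)"
    by (intro tendsto_is_norm[OF N] tendsto_intros P Q)
  moreover have "(\<lambda>k. N (P k - Z k)) \<longlonglongrightarrow> N (p - (q + (1/2) *\<^sub>R (\<zeta> - q)))"
    unfolding Z_def by (intro tendsto_is_norm[OF N] tendsto_intros P Q)
  ultimately have "N (p - q) \<le> N (p - (q + (1/2) *\<^sub>R (\<zeta> - q)))"
    using tendsto_le[OF sequentially_bot] by blast
  also have "p - (q + (1/2) *\<^sub>R (\<zeta> - q)) = (1/2) *\<^sub>R (p - q) + (1/2) *\<^sub>R (p - \<zeta>)"
    by (simp add: vec_eq_iff field_simps)
  also have "N \<dots> \<le> (1/2) * N (p - q) + (1/2) * N (p - \<zeta>)"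
    using is_norm_triangle[OF N, of "(1/2) *\<^sub>R (p - q)" "(1/2) *\<^sub>R (p - \<zeta>)"]
    by (simp add: is_norm_scaleR[OF N])
  finally show ?thesis by simp
qed

lemma closed_nearest_pairs:
  fixes A :: "real^'n^'m"
  assumes N: "is_norm N"
  shows "closed (nearest_pairs A N)"
  unfolding closed_sequential_limits
proof (intro allI impI, elim conjE)
  fix s :: "nat \<Rightarrow> (real^'n) \<times> (real^'n)" and y
  assume s: "\<forall>k. s k \<in> nearest_pairs A N" and lim: "s \<longlonglongrightarrow> y"
  define Q where "Q k = fst (s k)" for k
  define P where "P k = snd (s k)" for k
  have sk: "(Q k, P k) \<in> nearest_pairs A N" for k
    using s by (simp add: Q_def P_def)
  have "\<forall>k. s k \<in> disjoint_pairs"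
    using s nearest_pairs_subset by blast
  then have "y \<in> disjoint_pairs"
    using closed_sequential_limits[THEN iffD1, OF compact_imp_closed[OF compact_disjoint_pairs]] lim
    by blast
  moreover have "snd y \<in> std_simplex" "fst y \<in> std_simplex" "Q k \<in> std_simplex" for k
    using calculation \<open>\<forall>k. s k \<in> disjoint_pairs\<close>
    by (auto simp: disjoint_pairs_def case_prod_unfold Q_def)
  moreover have "N (snd y - fst y) \<le> N (snd y - \<zeta>)" if "\<zeta> \<in> Zset A (A *v fst y)" for \<zeta>
  proof (rule nearest_pair_limit[OF N _ _ _ _ that])
    show "Q \<longlonglongrightarrow> fst y" "P \<longlonglongrightarrow> snd y"
      unfolding Q_def P_def using lim by (auto intro: tendsto_fst tendsto_snd)
    show "N (P k - Q k) \<le> N (P k - \<zeta>')" if "\<zeta>' \<in> Zset A (A *v Q k)" for k \<zeta>'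
      using sk[of k] that by (simp add: nearest_pairs_def)
  qed fact+
  ultimately show "y \<in> nearest_pairs A N"
    by (cases y) (simp add: nearest_pairs_def)
qed

lemma compact_nearest_pairs:
  assumes N: "is_norm N"
  shows "compact (nearest_pairs A N)"
proof -
  have "nearest_pairs A N = disjoint_pairs \<inter> nearest_pairs A N"
    using nearest_pairs_subset by blast
  then show ?thesis
    using compact_Int_closed[OF compact_disjoint_pairs closed_nearest_pairs[OF N, of A]] by simp
qed

definition pair_ratio ::
    "real^'n^'m \<Rightarrow> (real^'n \<Rightarrow> real) \<Rightarrow> (real^'m \<Rightarrow> real) \<Rightarrow> (real^'n) \<times> (real^'n) \<Rightarrow> real" where
  "pair_ratio A Nn Nm y = Nm (A *v (snd y - fst y)) / Nn (snd y - fst y)"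

definition operator_ratios :: "real^'n^'m \<Rightarrow> (real^'n \<Rightarrow> real) \<Rightarrow> (real^'m \<Rightarrow> real) \<Rightarrow> real set" where
  "operator_ratios A Nn Nm = {Nm (A *v w) / Nn w | w. w \<noteq> 0 \<and> (\<Sum>i\<in>UNIV. w $ i) = 0}"

definition error_ratios :: "real^'n^'m \<Rightarrow> (real^'n \<Rightarrow> real) \<Rightarrow> (real^'m \<Rightarrow> real) \<Rightarrow> real set" where
  "error_ratios A Nn Nm = {Nm (A *v x - u) / distN Nn x (Zset A u) | u x.
     u \<in> convA A \<and> x \<in> std_simplex - Zset A u}"

lemma continuous_on_matrix_vector_mult [continuous_intros]:
  fixes A :: "real^'n^'m"
  shows "continuous_on S f \<Longrightarrow> continuous_on S (\<lambda>x. A *v f x)"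
  by (rule continuous_on_compose2[OF matrix_vector_mult_linear_continuous_on]) auto

lemma ratio_scaleR:
  fixes A :: "real^'n^'m"
  assumes "is_norm Nn" "is_norm Nm" "0 < l"
  shows "Nm (A *v (l *\<^sub>R w)) / Nn (l *\<^sub>R w) = Nm (A *v w) / Nn w"
  using assms by (simp add: matrix_vector_mult_scaleR is_norm_scaleR)

lemma continuous_on_pair_ratio:
  fixes A :: "real^'n^'m"
  assumes Nn: "is_norm Nn" and Nm: "is_norm Nm"
  shows "continuous_on disjoint_pairs (pair_ratio A Nn Nm)"
  unfolding pair_ratio_def
proof (rule continuous_on_divide)
  show "continuous_on disjoint_pairs (\<lambda>y. Nm (A *v (snd y - fst y)))"
    by (intro continuous_on_is_norm[OF Nm] continuous_intros)
  show "continuous_on disjoint_pairs (\<lambda>y. Nn (snd y - fst y))"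
    by (intro continuous_on_is_norm[OF Nn] continuous_intros)
  show "\<forall>y\<in>disjoint_pairs. Nn (snd y - fst y) \<noteq> 0"
  proof
    fix y :: "(real^'n) \<times> (real^'n)"
    assume "y \<in> disjoint_pairs"
    then have "snd y - fst y \<noteq> 0" using disjoint_pairs_neq[of "fst y" "snd y"] by simp
    then show "Nn (snd y - fst y) \<noteq> 0" using is_norm_pos[OF Nn] by (metis less_irrefl)
  qed
qed

lemma operator_ratios_eq:
  assumes Nn: "is_norm Nn" and Nm: "is_norm Nm"
  shows "operator_ratios A Nn Nm = pair_ratio A Nn Nm ` disjoint_pairs"
proof (intro equalityI subsetI)
  fix r
  assume "r \<in> operator_ratios A Nn Nm"
  then obtain w where r: "r = Nm (A *v w) / Nn w" and w: "w \<noteq> 0" "(\<Sum>i\<in>UNIV. w $ i) = 0"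
    by (auto simp: operator_ratios_def)
  obtain l q p where l: "0 < l" and qp: "(q, p) \<in> disjoint_pairs" and wl: "w = l *\<^sub>R (p - q)"
    by (rule sum_zero_vector_split[OF w])
  have "r = pair_ratio A Nn Nm (q, p)"
    unfolding r wl ratio_scaleR[OF Nn Nm l] by (simp add: pair_ratio_def)
  then show "r \<in> pair_ratio A Nn Nm ` disjoint_pairs"
    using qp by blast
next
  fix r
  assume "r \<in> pair_ratio A Nn Nm ` disjoint_pairs"
  then obtain q p where qp: "(q, p) \<in> disjoint_pairs" and r: "r = pair_ratio A Nn Nm (q, p)"
    by auto
  have "p \<in> std_simplex" "q \<in> std_simplex" using qp by (simp_all add: disjoint_pairs_def)
  then have "(\<Sum>i\<in>UNIV. (p - q) $ i) = 0" by (rule std_simplex_diff_sum)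
  moreover have "p - q \<noteq> 0" using disjoint_pairs_neq[OF qp] by simp
  ultimately show "r \<in> operator_ratios A Nn Nm"
    unfolding operator_ratios_def r pair_ratio_def by auto
qed

lemma error_ratios_eq:
  assumes Nn: "is_norm Nn" and Nm: "is_norm Nm"
  shows "error_ratios A Nn Nm = pair_ratio A Nn Nm ` nearest_pairs A Nn"
proof (intro equalityI subsetI)
  fix r
  assume "r \<in> error_ratios A Nn Nm"
  then obtain u x where r: "r = Nm (A *v x - u) / distN Nn x (Zset A u)"
    and u: "u \<in> convA A" and x: "x \<in> std_simplex" and xZ: "x \<notin> Zset A u"
    by (auto simp: error_ratios_def)
  obtain z where z: "z \<in> Zset A u" and dist: "distN Nn x (Zset A u) = Nn (x - z)"
    and nearest: "\<And>z'. z' \<in> Zset A u \<Longrightarrow> Nn (x - z) \<le> Nn (x - z')"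
    using distN_Zset_attained[OF Nn u] by blast
  have "x \<noteq> z" using z xZ by auto
  then obtain l q p where l: "0 < l" and qp: "(q, p) \<in> nearest_pairs A Nn"
    and xz: "x - z = l *\<^sub>R (p - q)"
    by (rule nearest_pair_of_nearest_point[OF Nn x z _ nearest])
  have "A *v x - u = A *v (x - z)" using z by (simp add: Zset_def algebra_simps)
  then have "r = pair_ratio A Nn Nm (q, p)"
    using r dist xz ratio_scaleR[OF Nn Nm l] by (simp add: pair_ratio_def)
  then show "r \<in> pair_ratio A Nn Nm ` nearest_pairs A Nn" using qp by blast
next
  fix r
  assume "r \<in> pair_ratio A Nn Nm ` nearest_pairs A Nn"
  then obtain q p where qp: "(q, p) \<in> nearest_pairs A Nn" and r: "r = pair_ratio A Nn Nm (q, p)"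
    by auto
  have q: "q \<in> std_simplex" and p: "p \<in> std_simplex" and "p \<noteq> q"
    and nearest: "\<And>\<zeta>. \<zeta> \<in> Zset A (A *v q) \<Longrightarrow> Nn (p - q) \<le> Nn (p - \<zeta>)"
    using qp disjoint_pairs_neq by (auto simp: nearest_pairs_def disjoint_pairs_def)
  have qZ: "q \<in> Zset A (A *v q)" using q by (simp add: Zset_def)
  have "p \<notin> Zset A (A *v q)"
  proof
    assume "p \<in> Zset A (A *v q)"
    then have "Nn (p - q) \<le> 0" using nearest[of p] is_norm_zero[OF Nn] by simp
    then show False using is_norm_pos[OF Nn, of "p - q"] \<open>p \<noteq> q\<close> by simp
  qed
  moreover have "A *v q \<in> convA A" using q by (simp add: convA_def)
  moreover have "distN Nn p (Zset A (A *v q)) = Nn (p - q)"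
    unfolding distN_def by (rule cInf_eq_minimum) (use qZ nearest in auto)
  then have "r = Nm (A *v p - A *v q) / distN Nn p (Zset A (A *v q))"
    using r by (simp add: pair_ratio_def matrix_vector_mult_diff_distrib)
  ultimately show "r \<in> error_ratios A Nn Nm"
    unfolding error_ratios_def using p by blast
qed

lemma continuous_image_has_max:
  fixes f :: "'a::topological_space \<Rightarrow> real"
  assumes "compact K" "K \<noteq> {}" "continuous_on K f"
  obtains v where "is_max (f ` K) v"
  using continuous_attains_sup[OF assms] unfolding is_max_def by blast

lemma continuous_image_has_min:
  fixes f :: "'a::topological_space \<Rightarrow> real"
  assumes "compact K" "K \<noteq> {}" "continuous_on K f"
  obtains v where "is_min (f ` K) v"
  using continuous_attains_inf[OF assms] unfolding is_min_def by blast

definition conv_columns :: "real^'n^'m \<Rightarrow> 'n set \<Rightarrow> (real^'m) set" where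
  "conv_columns A C = (\<lambda>\<mu>. A *v \<mu>) ` {\<mu> \<in> std_simplex. \<forall>i. i \<notin> C \<longrightarrow> \<mu>$i = 0}"

lemma convex_conv_columns:
  fixes A :: "real^'n^'m" and C :: "'n set"
  shows "convex (conv_columns A C)"
proof -
  have "convex {\<mu>::real^'n. \<forall>i. i \<notin> C \<longrightarrow> \<mu>$i = 0}"
    unfolding convex_def by simp
  then have "convex {\<mu> \<in> std_simplex. \<forall>i. i \<notin> C \<longrightarrow> \<mu>$i = 0}"
    using convex_Int[OF convex_std_simplex] by (simp add: Collect_conj_eq)
  then show ?thesis
    unfolding conv_columns_def by (rule convex_linear_image[OF matrix_vector_mul_linear])
qed

lemma convA_eq_conv_columns: "convA A = conv_columns A UNIV"
  by (simp add: convA_def conv_columns_def)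

lemma convex_hull_columns: "convex hull ((\<lambda>i. column i A) ` C) = conv_columns A C"
proof
  show "convex hull ((\<lambda>i. column i A) ` C) \<subseteq> conv_columns A C"
  proof (rule hull_minimal)
    show "(\<lambda>i. column i A) ` C \<subseteq> conv_columns A C"
    proof
      fix y
      assume "y \<in> (\<lambda>i. column i A) ` C"
      then obtain i where "i \<in> C" "y = A *v axis i 1" by (auto simp: matrix_vector_mult_basis)
      then show "y \<in> conv_columns A C"
        unfolding conv_columns_def using axis_in_std_simplex[of i] by (auto simp: axis_def)
    qed
  qed (rule convex_conv_columns)
next
  show "conv_columns A C \<subseteq> convex hull ((\<lambda>i. column i A) ` C)"
  proof
    fix y
    assume "y \<in> conv_columns A C"
    then obtain \<mu> where y: "y = A *v \<mu>" and \<mu>: "\<mu> \<in> std_simplex" "\<forall>i. i \<notin> C \<longrightarrow> \<mu>$i = 0"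
      by (auto simp: conv_columns_def)
    have "y = (\<Sum>i\<in>UNIV. \<mu>$i *\<^sub>R column i A)"
      unfolding y by (simp add: matrix_mult_sum scalar_mult_eq_scaleR)
    also have "\<dots> = (\<Sum>i\<in>C. \<mu>$i *\<^sub>R column i A)"
      using \<mu>(2) by (intro sum.mono_neutral_right) auto
    finally have y: "y = (\<Sum>i\<in>C. \<mu>$i *\<^sub>R column i A)" .
    have "(\<Sum>i\<in>C. \<mu>$i) = (\<Sum>i\<in>UNIV. \<mu>$i)"
      using \<mu>(2) by (intro sum.mono_neutral_left) auto
    then have "(\<Sum>i\<in>C. \<mu>$i) = 1" using std_simplex_sum[OF \<mu>(1)] by simp
    then show "y \<in> convex hull ((\<lambda>i. column i A) ` C)"
      unfolding y using std_simplex_nonneg[OF \<mu>(1)]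
      by (intro convex_sum) (auto intro: hull_inc)
  qed
qed

lemma convA_eq_convex_hull_columns: "convA A = convex hull (range (\<lambda>i. column i A))"
  by (simp add: convA_eq_conv_columns convex_hull_columns)

lemma column_in_convA: "column j A \<in> convA A"
  unfolding convA_def using axis_in_std_simplex[of j]
  by (metis image_eqI matrix_vector_mult_basis)

lemma conv_columns_face_of:
  fixes A :: "real^'n^'m"
  assumes supp: "\<And>\<gamma> i. \<gamma> \<in> std_simplex \<Longrightarrow> A *v \<gamma> \<in> conv_columns A C \<Longrightarrow> 0 < \<gamma>$i \<Longrightarrow> i \<in> C"
  shows "conv_columns A C face_of convA A"
  unfolding face_of_def
proof (intro conjI ballI impI)
  show "conv_columns A C \<subseteq> convA A"
    by (auto simp: conv_columns_def convA_def)
  show "convex (conv_columns A C)" by (rule convex_conv_columns)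
  fix a b y
  assume a: "a \<in> convA A" and b: "b \<in> convA A" and y: "y \<in> conv_columns A C"
    and seg: "y \<in> open_segment a b"
  obtain \<alpha> \<beta> where \<alpha>: "\<alpha> \<in> std_simplex" "a = A *v \<alpha>" and \<beta>: "\<beta> \<in> std_simplex" "b = A *v \<beta>"
    using a b by (auto simp: convA_def)
  obtain s where s: "0 < s" "s < 1" "y = (1 - s) *\<^sub>R a + s *\<^sub>R b"
    using seg by (auto simp: in_segment)
  define \<gamma> where "\<gamma> = (1 - s) *\<^sub>R \<alpha> + s *\<^sub>R \<beta>"
  have \<gamma>: "\<gamma> \<in> std_simplex"
    unfolding \<gamma>_def using s by (intro convexD[OF convex_std_simplex \<alpha>(1) \<beta>(1)]) simp_all
  have A\<gamma>: "A *v \<gamma> \<in> conv_columns A C"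
    using y s(3) \<alpha>(2) \<beta>(2) by (simp add: \<gamma>_def algebra_simps)
  have "\<alpha>$i = 0 \<and> \<beta>$i = 0" if "i \<notin> C" for i
  proof -
    have "\<gamma>$i \<le> 0" using supp[OF \<gamma> A\<gamma>, of i] that by (meson not_le)
    moreover have "0 \<le> (1 - s) * \<alpha>$i" "0 \<le> s * \<beta>$i"
      using s std_simplex_nonneg[OF \<alpha>(1), of i] std_simplex_nonneg[OF \<beta>(1), of i] by simp_all
    moreover have "\<gamma>$i = (1 - s) * \<alpha>$i + s * \<beta>$i" by (simp add: \<gamma>_def)
    ultimately have "(1 - s) * \<alpha>$i = 0" "s * \<beta>$i = 0" by linarith+
    then show ?thesis using s by simp
  qed
  then show "a \<in> conv_columns A C" "b \<in> conv_columns A C"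
    using \<alpha> \<beta> by (auto simp: conv_columns_def)
qed

lemma Zset_max_support:
  assumes u: "u \<in> convA A"
  obtains m where "m \<in> Zset A u" "\<And>\<nu> i. \<nu> \<in> Zset A u \<Longrightarrow> 0 < \<nu>$i \<Longrightarrow> 0 < m$i"
proof -
  define C where "C = {i. \<exists>\<nu>\<in>Zset A u. 0 < \<nu>$i}"
  have "\<forall>i\<in>C. \<exists>\<nu>. \<nu> \<in> Zset A u \<and> 0 < \<nu>$i" by (auto simp: C_def)
  then obtain \<nu> where \<nu>: "\<forall>i\<in>C. \<nu> i \<in> Zset A u \<and> 0 < \<nu> i $ i"
    by (rule bchoice[THEN exE])
  obtain z where z: "z \<in> Zset A u" using Zset_nonempty[OF u] by blast
  then have zS: "z \<in> std_simplex" by (simp add: Zset_def)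
  then obtain k where "z$k \<noteq> 0"
    using std_simplex_sum[OF zS] by (metis (mono_tags) sum.neutral zero_neq_one)
  then have "0 < z$k" using std_simplex_nonneg[OF zS, of k] by simp
  then have "k \<in> C" using z unfolding C_def by blast
  then have C: "0 < real (card C)" by (auto simp: card_gt_0_iff)
  define m where "m = (\<Sum>j\<in>C. (1 / real (card C)) *\<^sub>R \<nu> j)"
  have m: "m \<in> Zset A u"
    unfolding m_def using C \<nu> by (intro convex_sum convex_Zset) auto
  have pos: "0 < m$i" if i: "i \<in> C" for i
  proof -
    have "(1 / real (card C)) * \<nu> i $ i \<le> (\<Sum>j\<in>C. (1 / real (card C)) * \<nu> j $ i)"
    proof (rule member_le_sum[OF i])
      show "0 \<le> (1 / real (card C)) * \<nu> j $ i" if "j \<in> C - {i}" for j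
        using that \<nu> C std_simplex_nonneg[of "\<nu> j" i] by (simp add: Zset_def)
    qed simp
    moreover have "0 < (1 / real (card C)) * \<nu> i $ i"
      using C \<nu> i by simp
    ultimately show ?thesis by (simp add: m_def)
  qed
  show ?thesis
  proof (rule that[OF m])
    fix \<nu>' i
    assume "\<nu>' \<in> Zset A u" "0 < \<nu>'$i"
    then have "i \<in> C" unfolding C_def by blast
    then show "0 < m$i" by (rule pos)
  qed
qed

lemma conv_columns_support_subset:
  fixes A :: "real^'n^'m"
  assumes m: "m \<in> std_simplex"
    and maximal: "\<And>\<nu> i. \<nu> \<in> Zset A (A *v m) \<Longrightarrow> 0 < \<nu>$i \<Longrightarrow> 0 < m$i"
    and \<gamma>: "\<gamma> \<in> std_simplex" "A *v \<gamma> \<in> conv_columns A {i. 0 < m$i}" and i: "0 < \<gamma>$i"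
  shows "0 < m$i"
proof -
  obtain \<gamma>' where \<gamma>': "\<gamma>' \<in> std_simplex" "A *v \<gamma>' = A *v \<gamma>" "\<And>k. \<not> 0 < m$k \<Longrightarrow> \<gamma>'$k = 0"
    using \<gamma>(2) by (auto simp: conv_columns_def)
  define t where "t = Min (insert 1 ((\<lambda>k. m$k) ` {k. 0 < m$k}))"
  have t: "0 < t" unfolding t_def by (subst Min_gr_iff) auto
  have t\<gamma>': "t * \<gamma>'$k \<le> m$k" for k
  proof (cases "0 < m$k")
    case True
    then have "t \<le> m$k" unfolding t_def by (intro Min_le) auto
    then show ?thesis
      using std_simplex_le_1[OF \<gamma>'(1), of k] std_simplex_nonneg[OF \<gamma>'(1), of k] t
      by (smt (verit) mult_left_le mult_right_mono)
  next
    case False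
    then show ?thesis using \<gamma>'(3) std_simplex_nonneg[OF m] by simp
  qed
  have \<gamma>Z: "\<gamma> \<in> Zset A (A *v \<gamma>')" using \<gamma>(1) \<gamma>'(2) by (simp add: Zset_def)
  have mZ: "m \<in> Zset A (A *v m)" using m by (simp add: Zset_def)
  have "m - t *\<^sub>R \<gamma>' + t *\<^sub>R \<gamma> \<in> Zset A (A *v m)"
    by (rule Zset_exchange[OF mZ less_imp_le[OF t] t\<gamma>' \<gamma>'(1) \<gamma>Z])
  moreover have "0 < (m - t *\<^sub>R \<gamma>' + t *\<^sub>R \<gamma>) $ i"
    using t\<gamma>'[of i] mult_pos_pos[OF t i] by simp
  ultimately show ?thesis by (rule maximal)
qed

lemma setdistN_nonneg:
  assumes "is_norm N" and "F \<noteq> {}" and "G \<noteq> {}"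
  shows "0 \<le> setdistN N F G"
  unfolding setdistN_def using assms by (intro cInf_greatest) (auto simp: is_norm_nonneg)

lemma facial_distance_le:
  fixes A :: "real^'n^'m"
  assumes N: "is_norm N" and F: "F face_of convA A" "F \<noteq> {}" "F \<noteq> convA A"
    and a: "a \<in> F" and b: "b \<in> convex hull {column i A | i. column i A \<notin> F}"
  shows "facial_distance N A \<le> N (a - b)"
proof -
  let ?H = "\<lambda>F. convex hull {column i A | i. column i A \<notin> F}"
  have H: "?H F' \<noteq> {}" if "F' face_of convA A" "F' \<noteq> convA A" for F'
  proof
    assume "?H F' = {}"
    then have "range (\<lambda>i. column i A) \<subseteq> F'" by auto
    then have "convA A \<subseteq> F'"
      unfolding convA_eq_convex_hull_columns using face_of_imp_convex[OF that(1)]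
      by (rule hull_minimal)
    then show False using face_of_imp_subset[OF that(1)] that(2) by auto
  qed
  have "facial_distance N A \<le> setdistN N F (?H F)"
    unfolding facial_distance_def
  proof (rule cInf_lower)
    show "bdd_below {setdistN N F (?H F) |F. F face_of convA A \<and> F \<noteq> {} \<and> F \<noteq> convA A}"
      using H setdistN_nonneg[OF N] by (intro bdd_belowI[of _ 0]) blast
  qed (use F in blast)
  also have "setdistN N F (?H F) \<le> N (a - b)"
    unfolding setdistN_def
    using a b by (intro cInf_lower bdd_belowI[of _ 0]) (auto simp: is_norm_nonneg[OF N])
  finally show ?thesis .
qed

text \<open>The face used here is the smallest face of \<open>conv(A)\<close> containing \<open>A q\<close>: the hull of the
  columns that occur in some representation of \<open>A q\<close>.\<close>

lemma facial_distance_le_support: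
  fixes A :: "real^'n^'m"
  assumes N: "is_norm N" and q: "q \<in> std_simplex" and p: "p \<in> std_simplex"
    and disjoint: "\<And>\<nu> j. \<nu> \<in> Zset A (A *v q) \<Longrightarrow> 0 < p$j \<Longrightarrow> \<nu>$j = 0"
  shows "facial_distance N A \<le> N (A *v q - A *v p)"
proof -
  have qA: "A *v q \<in> convA A" using q by (simp add: convA_def)
  obtain m where m: "m \<in> Zset A (A *v q)"
    and maximal: "\<And>\<nu> i. \<nu> \<in> Zset A (A *v q) \<Longrightarrow> 0 < \<nu>$i \<Longrightarrow> 0 < m$i"
    by (rule Zset_max_support[OF qA]) blast
  have mS: "m \<in> std_simplex" and Am: "A *v m = A *v q" using m by (auto simp: Zset_def)
  define G where "G = conv_columns A {i. 0 < m$i}"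
  have supp: "0 < m$i" if "\<gamma> \<in> std_simplex" "A *v \<gamma> \<in> G" "0 < \<gamma>$i" for \<gamma> i
    using conv_columns_support_subset[OF mS _ that[unfolded G_def]] maximal Am by metis
  have face: "G face_of convA A"
    unfolding G_def using supp by (intro conv_columns_face_of) (simp add: G_def)
  have qZ: "q \<in> Zset A (A *v q)" using q by (simp add: Zset_def)
  have qG: "A *v q \<in> G"
    unfolding G_def conv_columns_def using q maximal[OF qZ] std_simplex_nonneg[OF q]
    by (auto simp: less_le)
  have col: "column j A \<notin> G" if "0 < p$j" for j
  proof
    assume "column j A \<in> G"
    then have "0 < m$j"
      using supp[OF axis_in_std_simplex, of j j] by (simp add: matrix_vector_mult_basis)
    then show False using disjoint[OF m that] by simp
  qed
  obtain j where "p$j \<noteq> 0"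
    using std_simplex_sum[OF p] by (metis (mono_tags) sum.neutral zero_neq_one)
  then have "column j A \<notin> G" using col std_simplex_nonneg[OF p, of j] by simp
  then have GA: "G \<noteq> convA A" using column_in_convA by blast
  have "A *v p \<in> conv_columns A {i. column i A \<notin> G}"
    unfolding conv_columns_def using p col std_simplex_nonneg[OF p] by (force simp: less_le)
  moreover have "{column i A | i. column i A \<notin> G} = (\<lambda>i. column i A) ` {i. column i A \<notin> G}"
    by auto
  ultimately have "A *v p \<in> convex hull {column i A | i. column i A \<notin> G}"
    by (simp flip: convex_hull_columns)
  then show ?thesis
    using facial_distance_le[OF N face _ GA qG] qG by blast
qed

lemma Zset_exchange_overlap:
  assumes x: "x \<in> std_simplex" and z: "z \<in> Zset A u" and l: "0 < l" and q: "q \<in> std_simplex"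
    and lq: "\<And>i. l * q$i = max (z$i - x$i) 0"
    and \<nu>: "\<nu> \<in> Zset A (A *v q)" and \<nu>j: "0 < \<nu>$j" and zj: "z$j < x$j"
  shows "z - l *\<^sub>R q + l *\<^sub>R \<nu> \<in> Zset A u"
    and "(\<Sum>i\<in>UNIV. min (x$i) (z$i)) < (\<Sum>i\<in>UNIV. min (x$i) ((z - l *\<^sub>R q + l *\<^sub>R \<nu>)$i))"
proof -
  have zS: "z \<in> std_simplex" and \<nu>S: "\<nu> \<in> std_simplex" using z \<nu> by (auto simp: Zset_def)
  have "l * q$i \<le> z$i" for i
    unfolding lq using std_simplex_nonneg[OF x, of i] std_simplex_nonneg[OF zS, of i] by simp
  then show "z - l *\<^sub>R q + l *\<^sub>R \<nu> \<in> Zset A u"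
    by (rule Zset_exchange[OF z less_imp_le[OF l] _ q \<nu>])
  have z'i: "(z - l *\<^sub>R q + l *\<^sub>R \<nu>)$i = min (x$i) (z$i) + l * \<nu>$i" for i
    using lq[of i] by (simp add: min_def max_def)
  show "(\<Sum>i\<in>UNIV. min (x$i) (z$i)) < (\<Sum>i\<in>UNIV. min (x$i) ((z - l *\<^sub>R q + l *\<^sub>R \<nu>)$i))"
  proof (rule sum_strict_mono_ex1)
    have "0 \<le> l * \<nu>$i" for i using l std_simplex_nonneg[OF \<nu>S, of i] by simp
    then show "\<forall>i\<in>UNIV. min (x$i) (z$i) \<le> min (x$i) ((z - l *\<^sub>R q + l *\<^sub>R \<nu>)$i)"
      using z'i by (simp add: min_def)
    have "min (x$j) (z$j) < min (x$j) ((z - l *\<^sub>R q + l *\<^sub>R \<nu>)$j)"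
      unfolding z'i using zj mult_pos_pos[OF l \<nu>j] by (simp add: min_def)
    then show "\<exists>i\<in>UNIV. min (x$i) (z$i) < min (x$i) ((z - l *\<^sub>R q + l *\<^sub>R \<nu>)$i)" by blast
  qed simp
qed

text \<open>The nearest point \<open>z\<close> is chosen to overlap \<open>x\<close> as much as possible; then no column in
  the support of \<open>p\<close> can be traded into a representation of \<open>A q\<close> without increasing the overlap.\<close>

lemma facial_distance_le_error_ratio:
  fixes A :: "real^'n^'m"
  assumes Nn: "is_norm Nn" and Nm: "is_norm Nm" and u: "u \<in> convA A"
    and x: "x \<in> std_simplex" and xZ: "x \<notin> Zset A u"
  shows "facial_distance Nm A / Max (range (\<lambda>i. Nn (axis i 1)))
          \<le> 2 * Nm (A *v x - u) / distN Nn x (Zset A u)"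
proof -
  let ?M = "Max (range (\<lambda>i. Nn (axis i 1)))"
  let ?overlap = "\<lambda>z. \<Sum>i\<in>UNIV. min (x$i) (z$i)"
  have "continuous_on (Zset A u) ?overlap" by (intro continuous_intros)
  then obtain z where z: "z \<in> Zset A u" and zmax: "\<And>z'. z' \<in> Zset A u \<Longrightarrow> ?overlap z' \<le> ?overlap z"
    using continuous_attains_sup[OF compact_Zset Zset_nonempty[OF u]] by blast
  have zS: "z \<in> std_simplex" and Az: "A *v z = u" using z by (auto simp: Zset_def)
  have "x - z \<noteq> 0" using z xZ by auto
  then obtain l q p where l: "0 < l" and qp: "(q, p) \<in> disjoint_pairs" and xz: "x - z = l *\<^sub>R (p - q)"
    and lp: "\<And>i. l * p$i = max ((x - z)$i) 0" and lq: "\<And>i. l * q$i = max (- (x - z)$i) 0"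
    by (rule sum_zero_vector_split[OF _ std_simplex_diff_sum[OF x zS]]) blast
  have q: "q \<in> std_simplex" and p: "p \<in> std_simplex" using qp by (auto simp: disjoint_pairs_def)
  have "\<nu>$j = 0" if \<nu>: "\<nu> \<in> Zset A (A *v q)" and j: "0 < p$j" for \<nu> j
  proof (rule ccontr)
    assume "\<nu>$j \<noteq> 0"
    then have \<nu>j: "0 < \<nu>$j" using \<nu> std_simplex_nonneg[of \<nu> j] by (simp add: Zset_def)
    have zj: "z$j < x$j" using lp[of j] mult_pos_pos[OF l j] by simp
    have "l * q$i = max (z$i - x$i) 0" for i using lq[of i] by simp
    note exchange = Zset_exchange_overlap[OF x z l q this \<nu> \<nu>j zj]
    show False using zmax[OF exchange(1)] exchange(2) by simp
  qed
  then have Phi: "facial_distance Nm A \<le> Nm (A *v q - A *v p)"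
    by (intro facial_distance_le_support[OF Nm q p])
  have err: "Nm (A *v x - u) = l * Nm (A *v q - A *v p)"
  proof -
    have "A *v x - u = A *v (x - z)" using Az by (simp add: matrix_vector_mult_diff_distrib)
    also have "\<dots> = l *\<^sub>R (A *v p - A *v q)"
      unfolding xz by (simp add: matrix_vector_mult_scaleR matrix_vector_mult_diff_distrib)
    finally show ?thesis using l is_norm_minus_commute[OF Nm] by (simp add: is_norm_scaleR[OF Nm])
  qed
  have dist: "distN Nn x (Zset A u) \<le> l * (2 * ?M)"
  proof -
    have "distN Nn x (Zset A u) \<le> Nn (x - z)" by (rule distN_le[OF Nn z])
    also have "\<dots> = l * Nn (p - q)" using xz l by (simp add: is_norm_scaleR[OF Nn])
    also have "\<dots> \<le> l * (2 * ?M)"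
      using std_simplex_diff_norm_le[OF Nn p q] l by simp
    finally show ?thesis .
  qed
  have M: "0 < ?M" by (rule Max_norm_axis_pos[OF Nn])
  have "facial_distance Nm A / ?M \<le> Nm (A *v q - A *v p) / ?M"
    using Phi M by (rule divide_right_mono[OF _ less_imp_le])
  also have "\<dots> = 2 * Nm (A *v x - u) / (l * (2 * ?M))"
    using l by (simp add: err)
  also have "\<dots> \<le> 2 * Nm (A *v x - u) / distN Nn x (Zset A u)"
    using dist distN_Zset_pos[OF Nn u xZ] is_norm_nonneg[OF Nm] by (intro divide_left_mono) auto
  finally show ?thesis .
qed

lemma error_ratios_subset_operator_ratios:
  assumes "is_norm Nn" and "is_norm Nm"
  shows "error_ratios A Nn Nm \<subseteq> operator_ratios A Nn Nm"
  unfolding error_ratios_eq[OF assms] operator_ratios_eq[OF assms]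
  by (rule image_mono[OF nearest_pairs_subset])

lemma operator_ratios_pos:
  fixes A :: "real^'n^'m"
  assumes Nn: "is_norm Nn" and Nm: "is_norm Nm" and cols: "column i A \<noteq> column j A"
  shows "\<exists>r\<in>operator_ratios A Nn Nm. 0 < r"
proof -
  define e where "e = axis i 1 - axis j (1::real)"
  have "A *v e = column i A - column j A"
    by (simp add: e_def matrix_vector_mult_diff_distrib matrix_vector_mult_basis)
  then have "A *v e \<noteq> 0" using cols by simp
  then have "e \<noteq> 0" by auto
  then have "0 < Nm (A *v e) / Nn e"
    using \<open>A *v e \<noteq> 0\<close> is_norm_pos[OF Nn, of e] is_norm_pos[OF Nm, of "A *v e"] by simp
  moreover have "(\<Sum>k\<in>UNIV. e$k) = 0"
    unfolding e_def by (rule std_simplex_diff_sum[OF axis_in_std_simplex axis_in_std_simplex])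
  ultimately show ?thesis using \<open>e \<noteq> 0\<close> by (auto simp: operator_ratios_def)
qed

lemma error_ratios_nonempty:
  fixes A :: "real^'n^'m"
  assumes "column i A \<noteq> column j A"
  shows "error_ratios A Nn Nm \<noteq> {}"
proof -
  have "axis i 1 \<notin> Zset A (column j A)"
    using assms by (simp add: Zset_def matrix_vector_mult_basis)
  then show ?thesis
    using column_in_convA[of j A] axis_in_std_simplex[of i] by (auto simp: error_ratios_def)
qed

lemma is_max_operator_ratios_error_ratios:
  fixes A :: "real^'n^'m"
  assumes Nn: "is_norm Nn" and Nm: "is_norm Nm" and cols: "column i A \<noteq> column j A"
  obtains v where "is_max (operator_ratios A Nn Nm) v" "is_max (error_ratios A Nn Nm) v"
proof -
  have "(disjoint_pairs :: ((real^'n) \<times> (real^'n)) set) \<noteq> {}"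
    using operator_ratios_pos[OF Nn Nm cols] unfolding operator_ratios_eq[OF Nn Nm] by auto
  then obtain v where "is_max (pair_ratio A Nn Nm ` disjoint_pairs) v"
    by (rule continuous_image_has_max[OF compact_disjoint_pairs _ continuous_on_pair_ratio[OF Nn Nm]])
  then have v: "is_max (operator_ratios A Nn Nm) v" by (simp add: operator_ratios_eq[OF Nn Nm])
  then obtain q p where qp: "(q, p) \<in> disjoint_pairs" and vqp: "v = Nm (A *v (p - q)) / Nn (p - q)"
    by (auto simp: is_max_def operator_ratios_eq[OF Nn Nm] pair_ratio_def)
  have "0 < v" using operator_ratios_pos[OF Nn Nm cols] v by (force simp: is_max_def)
  then have "A *v p - A *v q \<noteq> 0"
    using vqp is_norm_zero[OF Nm] by (auto simp: matrix_vector_mult_diff_distrib)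
  moreover have q: "q \<in> std_simplex" and p: "p \<in> std_simplex"
    using qp by (auto simp: disjoint_pairs_def)
  ultimately have pZ: "p \<notin> Zset A (A *v q)" by (auto simp: Zset_def)
  have qZ: "q \<in> Zset A (A *v q)" using q by (simp add: Zset_def)
  have qA: "A *v q \<in> convA A" using q by (simp add: convA_def)
  define r where "r = Nm (A *v p - A *v q) / distN Nn p (Zset A (A *v q))"
  have r: "r \<in> error_ratios A Nn Nm"
    unfolding r_def error_ratios_def using qA p pZ by blast
  have "0 < Nn (p - q)" using is_norm_pos[OF Nn] disjoint_pairs_neq[OF qp] by simp
  then have "v \<le> r"
    unfolding vqp r_def matrix_vector_mult_diff_distrib
    using distN_le[OF Nn qZ] distN_Zset_pos[OF Nn qA pZ] is_norm_nonneg[OF Nm]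
    by (intro divide_left_mono) auto
  moreover have bound: "\<forall>r'\<in>error_ratios A Nn Nm. r' \<le> v"
    using v error_ratios_subset_operator_ratios[OF Nn Nm] by (auto simp: is_max_def)
  ultimately have "v = r" using r by (simp add: order_antisym)
  then have "is_max (error_ratios A Nn Nm) v" using r bound by (simp add: is_max_def)
  with v show ?thesis by (rule that)
qed

lemma is_min_error_ratios:
  fixes A :: "real^'n^'m"
  assumes Nn: "is_norm Nn" and Nm: "is_norm Nm" and cols: "column i A \<noteq> column j A"
  obtains \<mu> where "is_min (error_ratios A Nn Nm) \<mu>"
proof -
  have "nearest_pairs A Nn \<noteq> {}"
    using error_ratios_nonempty[OF cols, of Nn Nm] unfolding error_ratios_eq[OF Nn Nm] by auto
  then obtain \<mu> where "is_min (pair_ratio A Nn Nm ` nearest_pairs A Nn) \<mu>"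
    by (rule continuous_image_has_min[OF compact_nearest_pairs[OF Nn]
          _ continuous_on_subset[OF continuous_on_pair_ratio[OF Nn Nm] nearest_pairs_subset]])
  then show ?thesis using that by (simp add: error_ratios_eq[OF Nn Nm])
qed

theorem proposition2:
  fixes A :: "real^'n^'m" and Nn :: "real^'n \<Rightarrow> real" and Nm :: "real^'m \<Rightarrow> real"
  assumes "is_norm Nn" and "is_norm Nm"
    and "\<exists>i j. column i A \<noteq> column j A"
  shows "(\<exists>v. is_max {Nm (A *v w) / Nn w | w. w \<noteq> 0 \<and> (\<Sum>i\<in>UNIV. w $ i) = 0} v
           \<and> is_max {Nm (A *v x - u) / distN Nn x (Zset A u) | u x.
                       u \<in> convA A \<and> x \<in> std_simplex - Zset A u} v)
         \<and> (\<exists>\<mu>. is_min {2 * Nm (A *v x - u) / distN Nn x (Zset A u) | u x.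
                       u \<in> convA A \<and> x \<in> std_simplex - Zset A u} \<mu>
           \<and> facial_distance Nm A / Max (range (\<lambda>i. Nn (axis i 1))) \<le> \<mu>)"
proof -
  note Nn = assms(1) and Nm = assms(2)
  obtain i j where cols: "column i A \<noteq> column j A" using assms(3) by blast
  obtain v where "is_max (operator_ratios A Nn Nm) v" "is_max (error_ratios A Nn Nm) v"
    by (rule is_max_operator_ratios_error_ratios[OF Nn Nm cols])
  moreover obtain \<mu> where \<mu>: "is_min (error_ratios A Nn Nm) \<mu>"
    by (rule is_min_error_ratios[OF Nn Nm cols])
  have "{2 * Nm (A *v x - u) / distN Nn x (Zset A u) | u x. u \<in> convA A \<and> x \<in> std_simplex - Zset A u}
      = (\<lambda>r. 2 * r) ` error_ratios A Nn Nm"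
    unfolding error_ratios_def times_divide_eq_right[symmetric] by blast
  moreover have "is_min ((\<lambda>r. 2 * r) ` error_ratios A Nn Nm) (2 * \<mu>)"
    using \<mu> by (auto simp: is_min_def)
  moreover have "facial_distance Nm A / Max (range (\<lambda>i. Nn (axis i 1))) \<le> 2 * \<mu>"
    using \<mu> facial_distance_le_error_ratio[OF Nn Nm] by (auto simp: is_min_def error_ratios_def)
  ultimately show ?thesis
    unfolding operator_ratios_def error_ratios_def by auto
qed

end
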